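(* Let $2/5 < r < 1$, put $p = \left\lceil \frac{5r-2}{1-r} \right\rceil$ and $\alpha = p - \frac{5r-2}{1-r}$, and let $\alpha = (0.\alpha_1 \alpha_2 \cdots)_2$ be the binary expansion of $\alpha$ with infinitely many zero digits. Define binary words $w^{\langle 0 \rangle} = \emptyset$ and $w^{\langle i \rangle} = w^{\langle i-1 \rangle} w^{\langle i-1 \rangle}\, 01011\, 0^{p - \alpha_i}$ for $i \geq 1$; each $w^{\langle i \rangle}$ is a proper prefix of $w^{\langle i+1 \rangle}$, and let $w$ be the infinite binary word which is the limit of this sequence. Then $\lim_{n \to \infty} |P(w^{(n)})|/n = (5r-2)/3$.
   Context: For a binary word $x$, $x^j$ denotes $j$ concatenated copies of $x$ ($x^0$ is empty), and juxtaposition denotes concatenation. $w^{(n)}$ denotes the initial subword of length $n$ of $w$. For a binary word $u = u_1 \cdots u_\ell$ of length $\ell$, $P(u)$ is the set of indices $i \geq 2$ such that at least one of the following holds: (i) $\ell \geq i$ and $u_{i-1} u_i = 00$; (ii) $\ell \geq i+2$ and $u_{i-1} u_i u_{i+1} u_{i+2} = 0100$; (iii) $\ell \geq i+3$ and $u_{i-1} \cdots u_{i+3} = 01010$. *)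

theory Defs
  imports Complex_Main
begin

text \<open>Binary words are lists over nat with letters 0 and 1.
  The letter u_j (1-indexed) of a word u is u ! (j - 1).\<close>

definition letter :: "nat list \<Rightarrow> nat \<Rightarrow> nat" where
  "letter u j = u ! (j - 1)"

definition Pset :: "nat list \<Rightarrow> nat set" where
  "Pset u = {i. 2 \<le> i \<and>
     ((length u \<ge> i \<and> letter u (i-1) = 0 \<and> letter u i = 0) \<or>
      (length u \<ge> i + 2 \<and> letter u (i-1) = 0 \<and> letter u i = 1 \<and>
         letter u (i+1) = 0 \<and> letter u (i+2) = 0) \<or>
      (length u \<ge> i + 3 \<and> letter u (i-1) = 0 \<and> letter u i = 1 \<and>
         letter u (i+1) = 0 \<and> letter u (i+2) = 1 \<and> letter u (i+3) = 0))}"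

definition p_of :: "real \<Rightarrow> int" where
  "p_of r = \<lceil>(5*r - 2) / (1 - r)\<rceil>"

definition alpha_of :: "real \<Rightarrow> real" where
  "alpha_of r = real_of_int (p_of r) - (5*r - 2) / (1 - r)"

text \<open>i-th binary digit (i \<ge> 1) of the expansion of alpha in [0,1) with
  infinitely many zero digits (the greedy expansion).\<close>
definition alpha_digit :: "real \<Rightarrow> nat \<Rightarrow> nat" where
  "alpha_digit r i = nat (\<lfloor>2 ^ i * alpha_of r\<rfloor> mod 2)"

fun wblock :: "real \<Rightarrow> nat \<Rightarrow> nat list" where
  "wblock r 0 = []"
| "wblock r (Suc i) = wblock r i @ wblock r i @ [0,1,0,1,1] @
     replicate (nat (p_of r - int (alpha_digit r (Suc i)))) 0"

text \<open>The limit infinite word: letter n (0-indexed) read off from w<n+1>,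
  whose length is at least 5 (2^(n+1) - 1) > n.\<close>
definition wlim :: "real \<Rightarrow> nat \<Rightarrow> nat" where
  "wlim r n = wblock r (Suc n) ! n"

definition wprefix :: "real \<Rightarrow> nat \<Rightarrow> nat list" where
  "wprefix r n = map (wlim r) [0..<n]"

end

theory Submission
  imports Defs "HOL-Library.Sublist" "HOL-Library.Log_Nat" "HOL-Real_Asymp.Real_Asymp"
begin

text \<open>Every \<open>w\<langle>i\<rangle>\<close> is a concatenation of blocks \<open>01011 0^k\<close>, so the factors \<open>0100\<close> and
  \<open>01010\<close> never occur and \<open>P\<close> of a prefix is just the set of positions of the factor \<open>00\<close>.
  Put \<open>s = (5r - 2)/(1 - r)\<close>, so that \<open>p = \<lceil>s\<rceil>\<close>, \<open>\<alpha> = p - s\<close> and the claimed density is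
  \<open>s/(5 + s)\<close>. Measured against it by the discrepancy \<open>(5 + s)\<cdot>#00 - s\<cdot>length\<close>, the block
  \<open>01011 0^(p - \<alpha>\<^sub>i)\<close> contributes \<open>5(\<alpha> - \<alpha>\<^sub>i)\<close>; as the \<open>\<alpha>\<^sub>i\<close> are the binary digits of \<open>\<alpha>\<close>,
  the discrepancy of \<open>w\<langle>i\<rangle>\<close> telescopes to \<open>5(frac(2^i \<alpha>) - \<alpha>)\<close> and stays bounded. A prefix
  of \<open>w\<langle>i\<rangle> = w\<langle>i-1\<rangle> w\<langle>i-1\<rangle> 01011 0^k\<close> is a prefix of \<open>w\<langle>i-1\<rangle>\<close>, possibly preceded by
  one copy of \<open>w\<langle>i-1\<rangle>\<close>, or two copies followed by part of the last block; hence
  the prefix of length \<open>n\<close> has discrepancy \<open>O(log n)\<close>.\<close>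

text \<open>\<open>count_00 u\<close> counts the \<open>00\<close> factors of \<open>u 0\<close>: the letter after the end is read as \<open>0\<close>, which
  makes the count additive over concatenations whose second factor starts with \<open>0\<close>.\<close>

fun count_00 :: "nat list \<Rightarrow> nat" where
  "count_00 [] = 0"
| "count_00 [a] = (if a = 0 then 1 else 0)"
| "count_00 (a # b # t) = (if a = 0 \<and> b = 0 then 1 else 0) + count_00 (b # t)"

lemma count_00_append: "v = [] \<or> hd v = 0 \<Longrightarrow> count_00 (u @ v) = count_00 u + count_00 v"
proof (induction u rule: count_00.induct)
  case (2 a)
  then show ?case by (cases v) auto
qed auto

lemma count_00_le_length: "count_00 u \<le> length u"
  by (induction u rule: count_00.induct) auto

lemma count_00_replicate: "count_00 (replicate k 0) = k"
proof (induction k)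
  case (Suc k)
  then show ?case by (cases k) auto
qed simp

lemma count_00_tail_block: "count_00 ([0,1,0,1,1] @ replicate k 0) = k"
  by (subst count_00_append) (cases k, auto simp: count_00_replicate)

definition pairs_00 :: "nat list \<Rightarrow> nat set" where
  "pairs_00 u = {i. 2 \<le> i \<and> i \<le> length u \<and> letter u (i-1) = 0 \<and> letter u i = 0}"

lemma pairs_00_Cons:
  "pairs_00 (a # t) = (if a = 0 \<and> t \<noteq> [] \<and> hd t = 0 then {2} else {}) \<union> Suc ` pairs_00 t"
proof -
  have "i \<in> pairs_00 (a # t) \<longleftrightarrow> i \<in> (if a = 0 \<and> t \<noteq> [] \<and> hd t = 0 then {2} else {}) \<union> Suc ` pairs_00 t"
    for i
  proof (cases "i \<le> 2")
    case True
    then consider "i < 2" | "i = 2" by linarith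
    then show ?thesis
      by cases (auto simp: pairs_00_def letter_def hd_conv_nth Suc_le_eq)
  next
    case False
    then obtain j where "i = Suc j" "j \<ge> 2" by (metis Suc_le_D not_less_eq_eq)
    then show ?thesis
      by (auto simp: pairs_00_def letter_def image_iff nth_Cons')
  qed
  then show ?thesis by blast
qed

lemma finite_pairs_00: "finite (pairs_00 u)"
  unfolding pairs_00_def by (rule finite_subset[of _ "{..length u}"]) auto

lemma count_00_eq_card_pairs_00:
  "count_00 u = card (pairs_00 u) + (if u \<noteq> [] \<and> last u = 0 then 1 else 0)"
proof (induction u rule: count_00.induct)
  case (3 a b t)
  have "2 \<notin> Suc ` pairs_00 (b # t)" by (auto simp: pairs_00_def)
  then have "card (pairs_00 (a # b # t)) = (if a = 0 \<and> b = 0 then 1 else 0) + card (pairs_00 (b # t))"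
    unfolding pairs_00_Cons[of a] using finite_pairs_00[of "b # t"] by (auto simp: card_image)
  with 3 show ?case by simp
qed (auto simp: pairs_00_def)

lemma sublist_of_nth:
  assumes "j + length xs \<le> length u" and "map (\<lambda>k. u ! (j + k)) [0..<length xs] = xs"
  shows "sublist xs u"
proof -
  have "take (length xs) (drop j u) = map (\<lambda>k. u ! (j + k)) [0..<length xs]"
    using assms(1) by (intro nth_equalityI) auto
  then show ?thesis
    using assms(2) by (metis sublist_drop sublist_take sublist_order.order.trans)
qed

definition avoids_0100_01010 :: "nat list \<Rightarrow> bool" where
  "avoids_0100_01010 u \<longleftrightarrow> \<not> sublist [0,1,0,0] u \<and> \<not> sublist [0,1,0,1,0] u"

lemma avoids_0100_01010_Cons:
  "avoids_0100_01010 (a # t) \<longleftrightarrow>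
     avoids_0100_01010 t \<and> \<not> prefix [0,1,0,0] (a # t) \<and> \<not> prefix [0,1,0,1,0] (a # t)"
  unfolding avoids_0100_01010_def sublist_Cons_right by blast

lemma avoids_0100_01010_take: "avoids_0100_01010 u \<Longrightarrow> avoids_0100_01010 (take n u)"
  unfolding avoids_0100_01010_def by (meson sublist_take sublist_order.order.trans)

lemma Pset_eq_pairs_00:
  assumes "avoids_0100_01010 u"
  shows "Pset u = pairs_00 u"
proof -
  have "i \<in> pairs_00 u" if "i \<in> Pset u" for i
  proof -
    obtain j where i: "i = j + 2" using \<open>i \<in> Pset u\<close> unfolding Pset_def by (auto dest: le_Suc_ex)
    have "\<not> sublist [0,1,0,0] u" "\<not> sublist [0,1,0,1,0] u"
      using assms unfolding avoids_0100_01010_def by auto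
    then have "\<not> (j + 4 \<le> length u \<and> u!j = 0 \<and> u!(j+1) = 1 \<and> u!(j+2) = 0 \<and> u!(j+3) = 0)"
      and "\<not> (j + 5 \<le> length u \<and> u!j = 0 \<and> u!(j+1) = 1 \<and> u!(j+2) = 0 \<and> u!(j+3) = 1
              \<and> u!(j+4) = 0)"
      using sublist_of_nth[of j "[0,1,0,0]" u] sublist_of_nth[of j "[0,1,0,1,0]" u]
      by (auto simp: upt_rec eval_nat_numeral)
    with \<open>i \<in> Pset u\<close> show ?thesis
      unfolding Pset_def pairs_00_def letter_def i by (auto simp: eval_nat_numeral)
  qed
  then show ?thesis
    unfolding Pset_def pairs_00_def by blast
qed

inductive block_word :: "nat list \<Rightarrow> bool" where
  block_word_Nil: "block_word []"
| block_word_Cons_block: "block_word u \<Longrightarrow> block_word ([0,1,0,1,1] @ replicate k 0 @ u)"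

lemma block_word_append: "block_word u \<Longrightarrow> block_word v \<Longrightarrow> block_word (u @ v)"
proof (induction u rule: block_word.induct)
  case (block_word_Cons_block u k)
  then show ?case using block_word.block_word_Cons_block[of "u @ v" k] by simp
qed simp

lemma block_word_hd: "block_word u \<Longrightarrow> u = [] \<or> hd u = 0"
  by (cases u rule: block_word.cases) auto

lemma avoids_0100_01010_replicate_append:
  assumes "avoids_0100_01010 v" and "v = [] \<or> hd v = 0"
  shows "avoids_0100_01010 (replicate k 0 @ v)"
proof (induction k)
  case 0
  then show ?case using assms(1) by simp
next
  case (Suc k)
  have "replicate k 0 @ v = [] \<or> hd (replicate k 0 @ v) = 0"
    using assms(2) by (cases k) auto
  with Suc show ?case
    by (cases "replicate k 0 @ v") (auto simp: avoids_0100_01010_Cons)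
qed

lemma block_word_avoids_0100_01010: "block_word u \<Longrightarrow> avoids_0100_01010 u"
proof (induction u rule: block_word.induct)
  case block_word_Nil
  then show ?case by (simp add: avoids_0100_01010_def)
next
  case (block_word_Cons_block u k)
  then show ?case
    by (simp add: avoids_0100_01010_Cons avoids_0100_01010_replicate_append block_word_hd)
qed

lemma block_word_wblock: "block_word (wblock r i)"
proof (induction i)
  case (Suc i)
  then show ?case
    using block_word_Cons_block[OF block_word_Nil] by (auto intro!: block_word_append)
qed (simp add: block_word_Nil)

lemma prefix_wblock: "i \<le> j \<Longrightarrow> prefix (wblock r i) (wblock r j)"
  by (induction j rule: dec_induct) (auto intro: prefix_order.trans)

lemma two_power_le_length_wblock: "2 ^ i \<le> length (wblock r (Suc i))"
  by (induction i) auto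

lemma less_length_wblock: "n < length (wblock r (Suc n))"
  using less_exp two_power_le_length_wblock by (rule less_le_trans)

lemma wprefix_eq_take: "n \<le> length (wblock r i) \<Longrightarrow> wprefix r n = take n (wblock r i)"
proof (intro nth_equalityI)
  fix j
  assume "n \<le> length (wblock r i)" and "j < length (wprefix r n)"
  then have "j < length (wblock r i)"
    by (simp add: wprefix_def)
  then have "wblock r (Suc j) ! j = wblock r i ! j"
    using less_length_wblock[of j r] prefix_wblock[of i "Suc j" r] prefix_wblock[of "Suc j" i r]
    by (cases "i \<le> Suc j") (auto elim!: prefixE simp: nth_append simp del: wblock.simps)
  then show "wprefix r n ! j = take n (wblock r i) ! j"
    using \<open>j < length (wprefix r n)\<close> by (simp add: wprefix_def wlim_def)
qed (simp add: wprefix_def)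

lemma card_Pset_wprefix:
  "card (Pset (wprefix r n)) + (if wprefix r n \<noteq> [] \<and> last (wprefix r n) = 0 then 1 else 0)
     = count_00 (wprefix r n)"
proof -
  have "avoids_0100_01010 (wprefix r n)"
    unfolding wprefix_eq_take[OF less_imp_le[OF less_length_wblock]]
    by (intro avoids_0100_01010_take block_word_avoids_0100_01010 block_word_wblock)
  then show ?thesis
    by (simp add: Pset_eq_pairs_00 count_00_eq_card_pairs_00)
qed

definition discrepancy :: "real \<Rightarrow> nat list \<Rightarrow> real" where
  "discrepancy s u = (5 + s) * real (count_00 u) - s * real (length u)"

lemma discrepancy_append:
  "v = [] \<or> hd v = 0 \<Longrightarrow> discrepancy s (u @ v) = discrepancy s u + discrepancy s v"
  by (simp add: discrepancy_def count_00_append algebra_simps)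

lemma abs_discrepancy_le:
  assumes "s \<ge> 0"
  shows "\<bar>discrepancy s u\<bar> \<le> (5 + 2 * s) * real (length u)"
proof -
  have "real (count_00 u) \<le> real (length u)"
    using count_00_le_length by simp
  then have "(5 + s) * real (count_00 u) \<le> (5 + s) * real (length u)"
    using assms by (intro mult_left_mono) auto
  moreover have "0 \<le> s * real (length u)" "0 \<le> (5 + s) * real (count_00 u)"
    using assms by simp_all
  ultimately show ?thesis
    unfolding discrepancy_def by (simp add: abs_le_iff algebra_simps)
qed

lemma discrepancy_tail_block:
  "discrepancy s ([0,1,0,1,1] @ replicate k 0) = 5 * (real k - s)"
  unfolding discrepancy_def count_00_tail_block by (simp add: algebra_simps)

lemma frac_double: "frac (2 * x) = 2 * frac x - real (nat (\<lfloor>2 * x\<rfloor> mod 2))"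
proof -
  define b where "b = \<lfloor>2 * frac x\<rfloor>"
  have "b = 0 \<or> b = 1"
    unfolding b_def using frac_ge_0[of x] frac_lt_1[of x] by linarith
  moreover have "\<lfloor>2 * x\<rfloor> = \<lfloor>2 * frac x + of_int (2 * \<lfloor>x\<rfloor>)\<rfloor>"
    by (simp add: frac_def)
  then have "\<lfloor>2 * x\<rfloor> = b + 2 * \<lfloor>x\<rfloor>"
    unfolding b_def by (metis floor_add_int)
  ultimately show ?thesis
    unfolding frac_def by auto
qed

locale density_parameter =
  fixes r :: real
  assumes lower_bound: "2/5 < r" and upper_bound: "r < 1"
begin

definition s :: real where "s = (5*r - 2) / (1 - r)"

lemma s_pos: "s > 0"
  unfolding s_def using lower_bound upper_bound by simp

lemma density_eq: "s / (5 + s) = (5*r - 2) / 3"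
proof -
  have "5 + s = 3 / (1 - r)"
    unfolding s_def using upper_bound by (simp add: field_simps)
  then show ?thesis
    unfolding s_def using upper_bound by (simp add: field_simps)
qed

lemma p_of_pos: "p_of r \<ge> 1"
  using s_pos unfolding p_of_def s_def by linarith

lemma alpha_of_eq: "alpha_of r = p_of r - s"
  unfolding alpha_of_def s_def ..

lemma alpha_of_bounds: "0 \<le> alpha_of r" "alpha_of r < 1"
  unfolding alpha_of_def p_of_def by linarith+

lemma discrepancy_wblock: "discrepancy s (wblock r i) = 5 * (frac (2 ^ i * alpha_of r) - alpha_of r)"
proof (induction i)
  case 0
  then show ?case using alpha_of_bounds by (simp add: discrepancy_def frac_eq)
next
  case (Suc i)
  define k where "k = nat (p_of r - int (alpha_digit r (Suc i)))"
  have digit: "real (alpha_digit r (Suc i)) = 2 * frac (2 ^ i * alpha_of r) - frac (2 ^ Suc i * alpha_of r)"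
    using frac_double[of "2 ^ i * alpha_of r"] unfolding alpha_digit_def by (simp add: mult.assoc)
  have "alpha_digit r (Suc i) \<le> 1"
    unfolding alpha_digit_def by auto
  then have "real k = p_of r - real (alpha_digit r (Suc i))"
    unfolding k_def using p_of_pos by simp
  then have tail: "discrepancy s ([0,1,0,1,1] @ replicate k 0) = 5 * (alpha_of r - real (alpha_digit r (Suc i)))"
    unfolding discrepancy_tail_block alpha_of_eq by simp
  have "wblock r i @ [0,1,0,1,1] @ replicate k 0 = [] \<or> hd (wblock r i @ [0,1,0,1,1] @ replicate k 0) = 0"
    using block_word_hd[OF block_word_wblock, of r i] by (auto simp: hd_append)
  then have "discrepancy s (wblock r (Suc i))
      = discrepancy s (wblock r i) + discrepancy s (wblock r i) + discrepancy s ([0,1,0,1,1] @ replicate k 0)"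
    by (simp add: k_def discrepancy_append del: append.simps)
  then show ?case
    unfolding Suc tail digit by simp
qed

lemma abs_discrepancy_wblock_le: "\<bar>discrepancy s (wblock r i)\<bar> \<le> 5"
proof -
  have "\<bar>frac (2 ^ i * alpha_of r) - alpha_of r\<bar> \<le> 1"
    using frac_ge_0[of "2 ^ i * alpha_of r"] frac_lt_1[of "2 ^ i * alpha_of r"] alpha_of_bounds
    by linarith
  then show ?thesis
    unfolding discrepancy_wblock by (simp add: abs_mult)
qed

declare wblock.simps(2) [simp del]

text \<open>Growth per level: two copies of \<open>w\<langle>i\<rangle>\<close> (discrepancy at most \<open>5\<close> each) and a partial block
  of length at most \<open>5 + p\<close>.\<close>

definition K :: real where "K = 10 + (5 + 2 * s) * (5 + p_of r)"

lemma K_pos: "K > 0"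
  unfolding K_def using s_pos p_of_pos by (simp add: add_pos_nonneg)

lemma abs_discrepancy_take_wblock_le: "\<bar>discrepancy s (take m (wblock r i))\<bar> \<le> K * i"
proof (induction i arbitrary: m)
  case 0
  then show ?case by (simp add: discrepancy_def)
next
  case (Suc i)
  let ?W = "wblock r i"
  define T where "T = [0,1,0,1,1] @ replicate (nat (p_of r - int (alpha_digit r (Suc i)))) (0::nat)"
  have W: "wblock r (Suc i) = ?W @ ?W @ T"
    by (simp add: T_def wblock.simps)
  have K_ge: "K \<ge> 10"
    unfolding K_def using s_pos p_of_pos by simp
  have hd_prefix: "take m' ?W = [] \<or> hd (take m' ?W) = 0" for m'
    using block_word_hd[OF block_word_wblock, of r i] by (cases m') (auto simp: hd_take)
  consider "m \<le> length ?W" | "length ?W < m" "m \<le> 2 * length ?W" | "2 * length ?W < m"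
    by linarith
  then show ?case
  proof cases
    case 1
    then have "take m (wblock r (Suc i)) = take m ?W"
      unfolding W by simp
    then show ?thesis
      using Suc.IH[of m] K_ge by (simp add: algebra_simps)
  next
    case 2
    then have "take m (wblock r (Suc i)) = ?W @ take (m - length ?W) ?W"
      unfolding W by simp
    then have "discrepancy s (take m (wblock r (Suc i))) = discrepancy s ?W + discrepancy s (take (m - length ?W) ?W)"
      using discrepancy_append[OF hd_prefix] by simp
    then show ?thesis
      using abs_discrepancy_wblock_le[of i] Suc.IH[of "m - length ?W"] K_ge by (simp add: algebra_simps)
  next
    case 3
    let ?t = "take (m - 2 * length ?W) T"
    have hd_t: "?t = [] \<or> hd ?t = 0"
      unfolding T_def by (cases "m - 2 * length ?W") auto
    have hd_Wt: "?W @ ?t = [] \<or> hd (?W @ ?t) = 0"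
      using block_word_hd[OF block_word_wblock, of r i] hd_t by (auto simp: hd_append)
    have "take m (wblock r (Suc i)) = ?W @ ?W @ ?t"
      unfolding W using 3 by (simp add: mult_2)
    then have "discrepancy s (take m (wblock r (Suc i))) = discrepancy s ?W + (discrepancy s ?W + discrepancy s ?t)"
      by (simp only: discrepancy_append[OF hd_Wt] discrepancy_append[OF hd_t])
    moreover have "real (length ?t) \<le> 5 + p_of r"
      unfolding T_def using p_of_pos by auto
    then have "\<bar>discrepancy s ?t\<bar> \<le> K - 10"
      using abs_discrepancy_le[of s ?t] s_pos mult_left_mono[of "real (length ?t)" "5 + p_of r" "5 + 2 * s"]
      unfolding K_def by linarith
    moreover have "0 \<le> K * real i"
      using K_ge by simp
    ultimately show ?thesis
      using abs_discrepancy_wblock_le[of i]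
      by (simp only: abs_le_iff of_nat_Suc distrib_left, intro conjI; linarith)
  qed
qed

lemma abs_discrepancy_wprefix_le:
  assumes "n > 0"
  shows "\<bar>discrepancy s (wprefix r n)\<bar> \<le> K * (log 2 n + 2)"
proof -
  have n_le: "n \<le> length (wblock r (Suc (ceillog2 n)))"
    using le_two_power_ceillog2 two_power_le_length_wblock by (rule order.trans)
  have "\<bar>discrepancy s (wprefix r n)\<bar> \<le> K * Suc (ceillog2 n)"
    unfolding wprefix_eq_take[OF n_le] by (rule abs_discrepancy_take_wblock_le)
  also have "\<dots> \<le> K * (log 2 n + 2)"
    using ceillog2_less_log[OF assms] s_pos p_of_pos unfolding K_def
    by (intro mult_left_mono) auto
  finally show ?thesis .
qed

lemma abs_density_deviation_le:
  assumes "n > 0"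
  shows "\<bar>card (Pset (wprefix r n)) / n - s / (5 + s)\<bar> \<le> (K * (log 2 n + 2) + 1) / n"
proof -
  define \<delta> :: real where
    "\<delta> = (if wprefix r n \<noteq> [] \<and> last (wprefix r n) = 0 then 1 else 0)"
  have count: "real (count_00 (wprefix r n)) = card (Pset (wprefix r n)) + \<delta>"
    unfolding \<delta>_def card_Pset_wprefix[symmetric] by simp
  have "length (wprefix r n) = n"
    by (simp add: wprefix_def)
  then have "card (Pset (wprefix r n)) / n - s / (5 + s)
      = (discrepancy s (wprefix r n) / (5 + s) - \<delta>) / n"
    unfolding discrepancy_def count using assms s_pos by (simp add: field_simps)
  moreover have "\<bar>discrepancy s (wprefix r n) / (5 + s) - \<delta>\<bar> \<le> K * (log 2 n + 2) + 1"
  proof -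
    have "\<bar>discrepancy s (wprefix r n) / (5 + s)\<bar> \<le> \<bar>discrepancy s (wprefix r n)\<bar>"
      using s_pos by (simp add: abs_divide divide_le_eq mult_le_cancel_left1)
    moreover have "0 \<le> \<delta>" "\<delta> \<le> 1"
      unfolding \<delta>_def by simp_all
    ultimately show ?thesis
      using abs_discrepancy_wprefix_le[OF assms] by linarith
  qed
  ultimately show ?thesis
    using assms by (simp add: abs_divide divide_right_mono)
qed

end

theorem lemma4p15:
  fixes r :: real
  assumes "2/5 < r" and "r < 1"
  shows "(\<lambda>n. real (card (Pset (wprefix r n))) / real n) \<longlonglongrightarrow> (5*r - 2) / 3"
proof -
  interpret density_parameter r
    using assms by unfold_locales
  define bound where "bound n = (K * (log 2 n + 2) + 1) / n" for n :: nat
  have "bound \<longlonglongrightarrow> 0"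
    unfolding bound_def using K_pos by real_asymp
  moreover have "\<forall>\<^sub>F n in sequentially. \<bar>card (Pset (wprefix r n)) / n - s / (5 + s)\<bar> \<le> bound n"
    using eventually_gt_at_top[of 0] unfolding bound_def
    by eventually_elim (rule abs_density_deviation_le)
  then have "\<forall>\<^sub>F n in sequentially.
      norm (card (Pset (wprefix r n)) / n - s / (5 + s)) \<le> norm (bound n) * 1"
    by eventually_elim auto
  ultimately have "(\<lambda>n. card (Pset (wprefix r n)) / n - s / (5 + s)) \<longlonglongrightarrow> 0"
    by (rule tendsto_0_le)
  then show ?thesis
    unfolding LIM_zero_iff density_eq .
qed

end
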